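(* Let $n,k$ be positive integers with $n\ge 2(k+1)$, let $G=W_n^k$ be the web graph, and let $C\subseteq V(G)$ (possibly empty). Let $m_1=n-\delta_1+1$ where $\delta_1=\min_{v\in V}|N\langle v\rangle|$ (so $m_1=n-2k$ if $C=V$ and $m_1=n-2k+1$ if $C\ne V$). Then $\gamma_{\rm gr}(G;C)=m_1$ if (i) $C=V$, or (ii) there is $i\in V\setminus C$ such that $V\setminus N[i]$ induces a path $P_t$ with $t=n-2k-1$ and $C$ is a good configuration for this path. Otherwise $\gamma_{\rm gr}(G;C)=m_1-1$.
   Context: The web $W_n^k$ has vertex set $V=\{0,\dots,n-1\}$ and edge set $\{\{i,j\}: 0<|i-j|\le k \text{ or } |i-j|\ge n-k\}$. $N\langle v\rangle = N[v]$ (closed neighborhood) if $v\in C$ and $N\langle v\rangle=N(v)$ (open neighborhood) if $v\notin C$. A sequence $(v_1,\dots,v_s)$ of distinct vertices is legal if $N\langle v_i\rangle\setminus\bigcup_{j<i}N\langle v_j\rangle\neq\emptyset$ for all $i\ge 2$, and dominating if $\bigcup_j N\langle v_j\rangle=V$; $\gamma_{\rm gr}(G;C)$ is the maximum length of a legal dominating sequence. Good configuration (defined for a path with vertices $a_1,\dots,a_s$ in order, applied to $C\cap\{a_1,\dots,a_s\}$; isolated vertices outside $C$ are allowed): $C$ is a good configuration for the path if (i) $s=1$ and $a_1\in C$; or (ii) $s=2$ and $\{a_1,a_2\}\not\subseteq C$; or (iii) $s\ge 3$ and either $a_1\notin C$ and $C$ is a good configuration for $(a_3,\dots,a_s)$,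 or $a_s\notin C$ and $C$ is a good configuration for $(a_1,\dots,a_{s-2})$. *)

theory Defs
  imports Main
begin

definition web_V :: "nat \<Rightarrow> nat set" where
  "web_V n = {0..<n}"

definition web_adj :: "nat \<Rightarrow> nat \<Rightarrow> nat \<Rightarrow> nat \<Rightarrow> bool" where
  "web_adj n k i j \<longleftrightarrow> i < n \<and> j < n \<and> i \<noteq> j \<and>
     (nat \<bar>int i - int j\<bar> \<le> k \<or> nat \<bar>int i - int j\<bar> \<ge> n - k)"

definition open_nbhd :: "nat \<Rightarrow> nat \<Rightarrow> nat \<Rightarrow> nat set" where
  "open_nbhd n k v = {u \<in> web_V n. web_adj n k v u}"

definition closed_nbhd :: "nat \<Rightarrow> nat \<Rightarrow> nat \<Rightarrow> nat set" where
  "closed_nbhd n k v = insert v (open_nbhd n k v)"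

definition nbhdC :: "nat \<Rightarrow> nat \<Rightarrow> nat set \<Rightarrow> nat \<Rightarrow> nat set" where
  "nbhdC n k C v = (if v \<in> C then closed_nbhd n k v else open_nbhd n k v)"

definition legal_seq :: "nat \<Rightarrow> nat \<Rightarrow> nat set \<Rightarrow> nat list \<Rightarrow> bool" where
  "legal_seq n k C vs \<longleftrightarrow> distinct vs \<and> set vs \<subseteq> web_V n \<and>
     (\<forall>i. 1 \<le> i \<and> i < length vs \<longrightarrow>
        nbhdC n k C (vs ! i) - (\<Union>j<i. nbhdC n k C (vs ! j)) \<noteq> {})"

definition dominating_seq :: "nat \<Rightarrow> nat \<Rightarrow> nat set \<Rightarrow> nat list \<Rightarrow> bool" where
  "dominating_seq n k C vs \<longleftrightarrow> (\<Union>v\<in>set vs. nbhdC n k C v) = web_V n"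

definition gamma_gr :: "nat \<Rightarrow> nat \<Rightarrow> nat set \<Rightarrow> nat" where
  "gamma_gr n k C = Max {length vs | vs. legal_seq n k C vs \<and> dominating_seq n k C vs}"

text \<open>Good configuration of C for a path a_1,...,a_s given as a list.
  The empty path is not covered by the paper's definition; we set it to False.\<close>
function good_config :: "nat set \<Rightarrow> nat list \<Rightarrow> bool" where
  "good_config C [] = False"
| "good_config C [a] = (a \<in> C)"
| "good_config C [a, b] = (\<not> {a, b} \<subseteq> C)"
| "good_config C (a # b # c # rest) =
     ((a \<notin> C \<and> good_config C (c # rest)) \<or>
      (last (c # rest) \<notin> C \<and> good_config C (take (length rest + 1) (a # b # c # rest))))"
  by pat_completeness auto
termination by (relation "measure (\<lambda>(C, xs). length xs)") auto

definition induces_path :: "nat \<Rightarrow> nat \<Rightarrow> nat set \<Rightarrow> nat list \<Rightarrow> bool" where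
  "induces_path n k S as \<longleftrightarrow> distinct as \<and> set as = S \<and>
     (\<forall>p < length as. \<forall>q < length as.
        web_adj n k (as ! p) (as ! q) \<longleftrightarrow> (p = q + 1 \<or> q = p + 1))"

end

theory Submission
  imports Defs
begin

(* Every vertex of a legal sequence after the first dominates a new vertex, so a legal
   dominating sequence starting at v has length at most n - |N<v>| + 1 <= m1, while the
   sequence 0, 1, ..., n - 2k - 1 always reaches m1 - 1. For C <> V the bound m1 is reached
   exactly when some v outside C is followed by a tight completion, which dominates exactly
   one new vertex in each step. Rotating v to 0, the vertices left to dominate are 0 and the
   far vertices k + 1, ..., n - k - 1. For k >= 2 a vertex dominating exactly one of them
   exists only if there are at most two far vertices. For k = 1 the far vertices form a path,
   and a tight completion has to peel it from its ends: an end outside C dominates just its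
   inner neighbour and stays behind as an isolated undominated vertex. This is the recursion
   defining a good configuration. The isolated vertices left behind are every second vertex
   around the cycle, and they are finally dominated one at a time in a zigzag. *)

lemma web_adj_iff:
  "web_adj n k u v \<longleftrightarrow> u < n \<and> v < n \<and> u \<noteq> v \<and>
     (u < v \<and> (v - u \<le> k \<or> n - k \<le> v - u) \<or> v < u \<and> (u - v \<le> k \<or> n - k \<le> u - v))"
  unfolding web_adj_def by (cases "u \<le> v") (auto simp: nat_diff_distrib)

lemma mem_open_nbhd_iff: "x \<in> open_nbhd n k v \<longleftrightarrow> web_adj n k v x"
  unfolding open_nbhd_def web_V_def by (auto simp: web_adj_iff)

lemma mem_nbhdC_iff: "x \<in> nbhdC n k C v \<longleftrightarrow> x = v \<and> v \<in> C \<or> web_adj n k v x"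
  unfolding nbhdC_def closed_nbhd_def by (auto simp: mem_open_nbhd_iff)

lemma nbhdC_subset_web_V: "v < n \<Longrightarrow> nbhdC n k C v \<subseteq> web_V n"
  by (auto simp: mem_nbhdC_iff web_adj_iff web_V_def)

lemma nbhdC_Int_web_V_empty: "n \<le> v \<Longrightarrow> nbhdC n k C v \<inter> web_V n = {}"
  by (auto simp: mem_nbhdC_iff web_adj_iff web_V_def)

lemma finite_nbhdC [simp]: "finite (nbhdC n k C v)"
  by (cases "v < n") (auto intro: finite_subset[OF nbhdC_subset_web_V]
      simp: nbhdC_def closed_nbhd_def open_nbhd_def web_V_def)

lemma int_diff_mod_eq:
  assumes "u < n" "v < n"
  shows "(int v - int u) mod int n = int (if u \<le> v then v - u else n - (u - v))"
proof (cases "u \<le> v")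
  case True
  then show ?thesis using assms by simp
next
  case False
  have "(int v - int u) mod int n = (int v - int u + int n) mod int n" by simp
  also have "\<dots> = int v - int u + int n" using False assms by (intro mod_pos_pos_trivial) auto
  finally show ?thesis using False assms by simp
qed

lemma web_adj_iff_mod:
  "web_adj n k u v \<longleftrightarrow> u < n \<and> v < n \<and> u \<noteq> v \<and>
     ((int v - int u) mod int n \<le> int k \<or> int (n - k) \<le> (int v - int u) mod int n)"
  by (cases "u < n \<and> v < n") (auto simp: int_diff_mod_eq web_adj_iff)

section \<open>Rotations\<close>

definition cyc_shift :: "nat \<Rightarrow> nat \<Rightarrow> nat \<Rightarrow> nat" where
  "cyc_shift n r x = (x + r) mod n"

lemma cyc_shift_less: "0 < n \<Longrightarrow> cyc_shift n r x < n"
  by (simp add: cyc_shift_def)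

lemma cyc_shift_diff_mod:
  "(int (cyc_shift n r v) - int (cyc_shift n r u)) mod int n = (int v - int u) mod int n"
  by (simp add: cyc_shift_def zmod_int mod_diff_eq)

lemma inj_on_cyc_shift: "inj_on (cyc_shift n r) (web_V n)"
proof (rule inj_onI)
  fix u v assume uv: "u \<in> web_V n" "v \<in> web_V n" "cyc_shift n r u = cyc_shift n r v"
  then have "(int v - int u) mod int n = 0" using cyc_shift_diff_mod[of n r v u] by simp
  with uv(1,2) show "u = v" by (auto simp: web_V_def int_diff_mod_eq split: if_splits)
qed

lemma cyc_shift_image_web_V: "cyc_shift n r ` web_V n = web_V n"
  by (rule endo_inj_surj[OF _ _ inj_on_cyc_shift]) (auto simp: web_V_def cyc_shift_def)

lemma web_adj_cyc_shift:
  assumes "u < n" "v < n"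
  shows "web_adj n k (cyc_shift n r u) (cyc_shift n r v) \<longleftrightarrow> web_adj n k u v"
proof -
  have "cyc_shift n r u = cyc_shift n r v \<longleftrightarrow> u = v"
    using inj_on_cyc_shift[of n r] assms by (auto simp: web_V_def inj_on_def)
  with assms show ?thesis by (simp add: web_adj_iff_mod cyc_shift_diff_mod cyc_shift_less)
qed

lemma open_nbhd_cyc_shift:
  assumes "v < n" shows "open_nbhd n k (cyc_shift n r v) = cyc_shift n r ` open_nbhd n k v"
proof -
  have "open_nbhd n k (cyc_shift n r v) =
      {y \<in> cyc_shift n r ` web_V n. web_adj n k (cyc_shift n r v) y}"
    unfolding open_nbhd_def cyc_shift_image_web_V ..
  also have "\<dots> = cyc_shift n r ` open_nbhd n k v"
    using assms by (auto simp: open_nbhd_def web_V_def web_adj_cyc_shift)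
  finally show ?thesis .
qed

lemma nbhdC_cyc_shift:
  "v < n \<Longrightarrow> nbhdC n k C (cyc_shift n r v) = cyc_shift n r ` nbhdC n k (cyc_shift n r -` C) v"
  by (simp add: nbhdC_def closed_nbhd_def open_nbhd_cyc_shift)

lemma closed_nbhd_cyc_shift:
  "v < n \<Longrightarrow> closed_nbhd n k (cyc_shift n r v) = cyc_shift n r ` closed_nbhd n k v"
  by (simp add: closed_nbhd_def open_nbhd_cyc_shift)

lemma cyc_shift_0: "v < n \<Longrightarrow> cyc_shift n v 0 = v"
  by (simp add: cyc_shift_def)

lemma ex_map_cyc_shift:
  "set xs \<subseteq> web_V n \<Longrightarrow> \<exists>ys. set ys \<subseteq> web_V n \<and> xs = map (cyc_shift n r) ys"
proof (induction xs)
  case (Cons x xs)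
  then obtain ys where "set ys \<subseteq> web_V n" "xs = map (cyc_shift n r) ys" by auto
  moreover obtain y where "y \<in> web_V n" "x = cyc_shift n r y"
    using Cons.prems cyc_shift_image_web_V[of n r] by (metis imageE list.set_intros(1) subsetD)
  ultimately show ?case by (intro exI[of _ "y # ys"]) auto
qed simp

lemma web_V_diff_cyc_shift:
  "A \<subseteq> web_V n \<Longrightarrow> web_V n - cyc_shift n r ` A = cyc_shift n r ` (web_V n - A)"
  by (metis Diff_subset cyc_shift_image_web_V inj_on_cyc_shift inj_on_image_set_diff)

lemma web_V_diff_open_nbhd_cyc_shift:
  assumes "v < n"
  shows "web_V n - open_nbhd n k v = cyc_shift n v ` (web_V n - open_nbhd n k 0)"
proof -
  have "open_nbhd n k 0 \<subseteq> web_V n" by (auto simp: open_nbhd_def)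
  with assms show ?thesis
    using open_nbhd_cyc_shift[of 0 n k v] by (simp add: cyc_shift_0 web_V_diff_cyc_shift)
qed

lemma web_V_diff_closed_nbhd_cyc_shift:
  assumes "v < n"
  shows "web_V n - closed_nbhd n k v = cyc_shift n v ` (web_V n - closed_nbhd n k 0)"
proof -
  have "closed_nbhd n k 0 \<subseteq> web_V n"
    using assms by (auto simp: closed_nbhd_def open_nbhd_def web_V_def)
  with assms show ?thesis
    using closed_nbhd_cyc_shift[of 0 n k v] by (simp add: cyc_shift_0 web_V_diff_cyc_shift)
qed

lemma open_nbhd_0: "2 * k < n \<Longrightarrow> open_nbhd n k 0 = {1..k} \<union> {n - k..<n}"
  unfolding open_nbhd_def web_V_def web_adj_iff by auto

lemma card_open_nbhd:
  assumes "2 * k < n" "v < n" shows "card (open_nbhd n k v) = 2 * k"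
proof -
  have "open_nbhd n k v = cyc_shift n v ` open_nbhd n k 0"
    using open_nbhd_cyc_shift[of 0 n k v] assms by (simp add: cyc_shift_0)
  moreover have "inj_on (cyc_shift n v) (open_nbhd n k 0)"
    by (rule inj_on_subset[OF inj_on_cyc_shift]) (auto simp: open_nbhd_def)
  moreover have "card ({1..k} \<union> {n - k..<n}) = 2 * k"
    using assms by (subst card_Un_disjoint) auto
  ultimately show ?thesis using assms by (simp add: card_image open_nbhd_0)
qed

lemma card_nbhdC:
  assumes "2 * k < n" "v < n"
  shows "card (nbhdC n k C v) = (if v \<in> C then 2 * k + 1 else 2 * k)"
proof -
  have "v \<notin> open_nbhd n k v" "finite (open_nbhd n k v)"
    by (auto simp: mem_open_nbhd_iff web_adj_iff open_nbhd_def web_V_def)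
  then show ?thesis using assms by (simp add: nbhdC_def closed_nbhd_def card_open_nbhd)
qed

lemma Min_card_nbhdC:
  assumes "2 * k < n" "C \<subseteq> web_V n"
  shows "Min ((\<lambda>v. card (nbhdC n k C v)) ` web_V n) = (if C = web_V n then 2 * k + 1 else 2 * k)"
proof (cases "C = web_V n")
  case True
  with assms have "(\<lambda>v. card (nbhdC n k C v)) ` web_V n = {2 * k + 1}"
    by (force simp: card_nbhdC web_V_def)
  with True show ?thesis by simp
next
  case False
  with assms obtain u where "u \<in> web_V n - C" by blast
  with assms have "2 * k \<in> (\<lambda>v. card (nbhdC n k C v)) ` web_V n"
    by (force simp: card_nbhdC web_V_def)
  moreover have "\<forall>x \<in> (\<lambda>v. card (nbhdC n k C v)) ` web_V n. 2 * k \<le> x"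
    using assms by (auto simp: card_nbhdC web_V_def)
  ultimately show ?thesis using False by (intro Min_eqI) (auto simp: web_V_def)
qed

section \<open>Legal extensions and tight completions\<close>

text \<open>The set argument U is the set of vertices not yet dominated by the sequence built so far.\<close>

fun legal_from :: "nat \<Rightarrow> nat \<Rightarrow> nat set \<Rightarrow> nat set \<Rightarrow> nat list \<Rightarrow> bool" where
  "legal_from n k C U [] \<longleftrightarrow> True"
| "legal_from n k C U (w # ws) \<longleftrightarrow>
     nbhdC n k C w \<inter> U \<noteq> {} \<and> legal_from n k C (U - nbhdC n k C w) ws"

fun tight_from :: "nat \<Rightarrow> nat \<Rightarrow> nat set \<Rightarrow> nat set \<Rightarrow> nat list \<Rightarrow> bool" where
  "tight_from n k C U [] \<longleftrightarrow> U = {}"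
| "tight_from n k C U (w # ws) \<longleftrightarrow>
     (\<exists>x. nbhdC n k C w \<inter> U = {x}) \<and> tight_from n k C (U - nbhdC n k C w) ws"

lemma legal_from_iff_nth:
  "legal_from n k C U ws \<longleftrightarrow>
     (\<forall>i<length ws. nbhdC n k C (ws ! i) \<inter> (U - (\<Union>j<i. nbhdC n k C (ws ! j))) \<noteq> {})"
  by (induction ws arbitrary: U)
    (auto simp: All_less_Suc2 lessThan_Suc_eq_insert_0 Diff_eq Int_assoc)

lemma legal_seq_Cons_iff:
  "legal_seq n k C (v # ws) \<longleftrightarrow>
     distinct (v # ws) \<and> set (v # ws) \<subseteq> web_V n \<and> legal_from n k C (web_V n - nbhdC n k C v) ws"
proof -
  have shift: "(\<forall>i. 1 \<le> i \<and> i < length (v # ws) \<longrightarrow> P i) \<longleftrightarrow> (\<forall>i<length ws. P (Suc i))" for P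
    by (auto simp: Suc_le_eq gr0_conv_Suc)
  have UN_Suc: "(\<Union>j<Suc i. nbhdC n k C ((v # ws) ! j)) =
      nbhdC n k C v \<union> (\<Union>j<i. nbhdC n k C (ws ! j))" for i
    by (simp add: lessThan_Suc_eq_insert_0)
  have step: "nbhdC n k C (ws ! i) - (nbhdC n k C v \<union> (\<Union>j<i. nbhdC n k C (ws ! j))) \<noteq> {} \<longleftrightarrow>
      nbhdC n k C (ws ! i) \<inter> (web_V n - nbhdC n k C v - (\<Union>j<i. nbhdC n k C (ws ! j))) \<noteq> {}"
    if "set ws \<subseteq> web_V n" "i < length ws" for i
  proof -
    have "nbhdC n k C (ws ! i) \<subseteq> web_V n"
      using that nth_mem by (intro nbhdC_subset_web_V) (force simp: web_V_def)
    then show ?thesis by blast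
  qed
  show ?thesis
  proof (cases "set (v # ws) \<subseteq> web_V n")
    case True
    then show ?thesis unfolding legal_seq_def shift UN_Suc legal_from_iff_nth using step by simp
  qed (auto simp: legal_seq_def)
qed

lemma legal_from_length:
  "finite U \<Longrightarrow> legal_from n k C U ws \<Longrightarrow>
     length ws + card (U - (\<Union>w\<in>set ws. nbhdC n k C w)) \<le> card U"
proof (induction ws arbitrary: U)
  case (Cons w ws)
  have "U - (\<Union>w\<in>set (w # ws). nbhdC n k C w) = U - nbhdC n k C w - (\<Union>w\<in>set ws. nbhdC n k C w)"
    by auto
  moreover have "length ws + card (U - nbhdC n k C w - (\<Union>w\<in>set ws. nbhdC n k C w))
      \<le> card (U - nbhdC n k C w)"
    using Cons by simp
  moreover have "card (U - nbhdC n k C w) < card U"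
    using Cons.prems by (intro psubset_card_mono) auto
  ultimately show ?case by simp
qed simp

lemma tight_from_iff_legal_from:
  "finite U \<Longrightarrow> tight_from n k C U ws \<longleftrightarrow>
     legal_from n k C U ws \<and> U \<subseteq> (\<Union>w\<in>set ws. nbhdC n k C w) \<and> length ws = card U"
proof (induction ws arbitrary: U)
  case (Cons w ws)
  let ?N = "nbhdC n k C w"
  have card_U: "card U = card (U \<inter> ?N) + card (U - ?N)"
    using Cons.prems by (rule card_Int_Diff)
  show ?case
  proof
    assume "tight_from n k C U (w # ws)"
    then obtain x where "?N \<inter> U = {x}" "tight_from n k C (U - ?N) ws" by auto
    with Cons card_U show "legal_from n k C U (w # ws) \<and> U \<subseteq> (\<Union>w\<in>set (w # ws). nbhdC n k C w) \<and>
        length (w # ws) = card U"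
      by (auto simp: Int_commute)
  next
    assume asm: "legal_from n k C U (w # ws) \<and> U \<subseteq> (\<Union>w\<in>set (w # ws). nbhdC n k C w) \<and>
        length (w # ws) = card U"
    then have legal: "legal_from n k C (U - ?N) ws" and cover: "U - ?N \<subseteq> (\<Union>w\<in>set ws. nbhdC n k C w)"
      by auto
    have "U \<inter> ?N \<noteq> {}" using asm by auto
    then have "card (U \<inter> ?N) \<noteq> 0" using Cons.prems by simp
    moreover have "length ws \<le> card (U - ?N)"
      using legal_from_length[OF _ legal] cover Cons.prems by simp
    moreover have "Suc (length ws) = card U" using asm by simp
    ultimately have "card (U \<inter> ?N) = 1" and len: "length ws = card (U - ?N)"
      using card_U by linarith+
    then obtain x where "?N \<inter> U = {x}" by (auto simp: card_1_singleton_iff Int_commute)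
    with Cons.IH[of "U - ?N"] Cons.prems legal cover len show "tight_from n k C U (w # ws)"
      by simp
  qed
qed simp

lemma tight_from_distinct:
  "tight_from n k C U ws \<Longrightarrow> distinct ws \<and> (\<forall>w \<in> set ws. nbhdC n k C w \<inter> U \<noteq> {})"
  by (induction ws arbitrary: U) fastforce+

lemma tight_from_subset_web_V:
  "U \<subseteq> web_V n \<Longrightarrow> tight_from n k C U ws \<Longrightarrow> set ws \<subseteq> web_V n"
proof
  fix w assume "U \<subseteq> web_V n" "tight_from n k C U ws" "w \<in> set ws"
  then have "nbhdC n k C w \<inter> web_V n \<noteq> {}" using tight_from_distinct by blast
  then show "w \<in> web_V n"
    using nbhdC_Int_web_V_empty[of n w k C] by (cases "n \<le> w") (auto simp: web_V_def)
qed

lemma tight_from_Cons_singletonI: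
  assumes "nbhdC n k C w \<inter> U = {x}" "tight_from n k C (U - {x}) ws"
  shows "tight_from n k C U (w # ws)"
proof -
  have "U - nbhdC n k C w = U - {x}" using assms(1) by blast
  with assms show ?thesis by auto
qed

lemma tight_from_iff_legal_dominating:
  assumes "v < n"
  shows "tight_from n k C (web_V n - nbhdC n k C v) ws \<longleftrightarrow>
    legal_seq n k C (v # ws) \<and> dominating_seq n k C (v # ws) \<and>
    length ws = card (web_V n - nbhdC n k C v)"
proof -
  let ?U = "web_V n - nbhdC n k C v"
  have fin: "finite ?U" by (simp add: web_V_def)
  have dominating: "dominating_seq n k C (v # ws) \<longleftrightarrow> ?U \<subseteq> (\<Union>w\<in>set ws. nbhdC n k C w)"
    if "set ws \<subseteq> web_V n"
  proof -
    have "nbhdC n k C w \<subseteq> web_V n" if "w \<in> set (v # ws)" for w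
      using that \<open>set ws \<subseteq> web_V n\<close> assms by (intro nbhdC_subset_web_V) (auto simp: web_V_def)
    then show ?thesis
      using assms nbhdC_subset_web_V[of v n k C] by (auto simp: dominating_seq_def)
  qed
  show ?thesis
  proof
    assume tight: "tight_from n k C ?U ws"
    have "distinct ws" and hits: "\<forall>w \<in> set ws. nbhdC n k C w \<inter> ?U \<noteq> {}"
      using tight_from_distinct[OF tight] by auto
    have "set ws \<subseteq> web_V n" by (rule tight_from_subset_web_V[OF _ tight]) auto
    moreover from hits have "v \<notin> set ws" by auto
    ultimately show "legal_seq n k C (v # ws) \<and> dominating_seq n k C (v # ws) \<and> length ws = card ?U"
      using tight assms \<open>distinct ws\<close> dominating tight_from_iff_legal_from[OF fin]
      by (simp add: legal_seq_Cons_iff web_V_def)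
  next
    assume "legal_seq n k C (v # ws) \<and> dominating_seq n k C (v # ws) \<and> length ws = card ?U"
    then show "tight_from n k C ?U ws"
      using dominating tight_from_iff_legal_from[OF fin] by (simp add: legal_seq_Cons_iff)
  qed
qed

lemma legal_dominating_length:
  assumes "0 < n" "legal_seq n k C vs" "dominating_seq n k C vs"
  obtains v ws where "vs = v # ws" "v < n" "length ws \<le> card (web_V n - nbhdC n k C v)"
proof -
  obtain v ws where vs: "vs = v # ws"
    using assms(1,3) by (cases vs) (auto simp: dominating_seq_def web_V_def)
  with assms(2) have "v < n" "legal_from n k C (web_V n - nbhdC n k C v) ws"
    by (auto simp: legal_seq_Cons_iff web_V_def)
  then show thesis
    using that[OF vs] legal_from_length[of "web_V n - nbhdC n k C v"] by (force simp: web_V_def)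
qed

lemma legal_seq_upt:
  assumes "1 \<le> k" "2 * k + 2 \<le> n"
  shows "legal_seq n k C [0..<n - 2 * k]"
proof -
  have "legal_from n k C (web_V n - nbhdC n k C 0) [1..<n - 2 * k]"
    unfolding legal_from_iff_nth
  proof (intro allI impI)
    fix i assume i: "i < length [1..<n - 2 * k]"
    have "i + 1 + k \<in> nbhdC n k C ([1..<n - 2 * k] ! i) \<inter>
        (web_V n - nbhdC n k C 0 - (\<Union>j<i. nbhdC n k C ([1..<n - 2 * k] ! j)))"
      using i assms by (auto simp: mem_nbhdC_iff web_adj_iff web_V_def)
    then show "nbhdC n k C ([1..<n - 2 * k] ! i) \<inter>
        (web_V n - nbhdC n k C 0 - (\<Union>j<i. nbhdC n k C ([1..<n - 2 * k] ! j))) \<noteq> {}"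
      by blast
  qed
  moreover have "[0..<n - 2 * k] = 0 # [1..<n - 2 * k]" using assms by (simp add: upt_rec)
  ultimately show ?thesis using assms by (auto simp: legal_seq_Cons_iff web_V_def)
qed

lemma dominating_seq_upt:
  assumes "1 \<le> k" "2 * k + 2 \<le> n"
  shows "dominating_seq n k C [0..<n - 2 * k]"
proof -
  have "x \<in> (\<Union>v\<in>set [0..<n - 2 * k]. nbhdC n k C v)" if "x < n" for x
  proof -
    consider "x = 0" | "1 \<le> x \<and> x \<le> k \<or> n - k \<le> x" | "k < x \<and> x < n - k"
      by linarith
    then show ?thesis
    proof cases
      case 1
      then have "x \<in> nbhdC n k C 1" using assms by (simp add: mem_nbhdC_iff web_adj_iff)
      then show ?thesis using assms by fastforce
    next
      case 2
      then have "x \<in> nbhdC n k C 0" using assms \<open>x < n\<close> by (auto simp: mem_nbhdC_iff web_adj_iff)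
      then show ?thesis using assms by fastforce
    next
      case 3
      then have "x \<in> nbhdC n k C (x - k)"
        using assms \<open>x < n\<close> by (auto simp: mem_nbhdC_iff web_adj_iff)
      then show ?thesis using 3 by fastforce
    qed
  qed
  moreover have "nbhdC n k C v \<subseteq> web_V n" if "v \<in> set [0..<n - 2 * k]" for v
    using that by (intro nbhdC_subset_web_V) auto
  ultimately show ?thesis
    unfolding dominating_seq_def by (intro equalityI UN_least) (auto simp: web_V_def)
qed

lemma tight_from_cyc_shift:
  assumes "U \<subseteq> web_V n" "set ws \<subseteq> web_V n"
  shows "tight_from n k C (cyc_shift n r ` U) (map (cyc_shift n r) ws) \<longleftrightarrow>
    tight_from n k (cyc_shift n r -` C) U ws"
  using assms
proof (induction ws arbitrary: U)
  case (Cons w ws)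
  let ?f = "cyc_shift n r" and ?N = "nbhdC n k (cyc_shift n r -` C) w"
  have w: "w < n" using Cons.prems by (simp add: web_V_def)
  have N: "?N \<subseteq> web_V n" using w by (rule nbhdC_subset_web_V)
  have inj: "inj_on ?f (?N \<union> U)"
    using N Cons.prems by (auto intro: inj_on_subset[OF inj_on_cyc_shift])
  have "nbhdC n k C (?f w) \<inter> ?f ` U = ?f ` (?N \<inter> U)"
    using inj by (simp add: nbhdC_cyc_shift[OF w] inj_on_image_Int)
  moreover have "card (?f ` (?N \<inter> U)) = card (?N \<inter> U)"
    using inj by (intro card_image) (auto intro: inj_on_subset)
  moreover have "?f ` U - nbhdC n k C (?f w) = ?f ` (U - ?N)"
    unfolding nbhdC_cyc_shift[OF w] by (rule inj_on_image_set_diff[OF inj, symmetric]) auto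
  ultimately have "(\<exists>x. nbhdC n k C (?f w) \<inter> ?f ` U = {x}) \<longleftrightarrow> (\<exists>x. ?N \<inter> U = {x})"
    by (simp flip: card_1_singleton_iff)
  moreover have "tight_from n k C (?f ` (U - ?N)) (map ?f ws) \<longleftrightarrow>
      tight_from n k (cyc_shift n r -` C) (U - ?N) ws"
    using Cons.prems by (intro Cons.IH) auto
  ultimately show ?case using \<open>?f ` U - nbhdC n k C (?f w) = ?f ` (U - ?N)\<close> by simp
qed simp

lemma ex_tight_from_cyc_shift:
  assumes "v < n"
  shows "(\<exists>ws. tight_from n k C (web_V n - open_nbhd n k v) ws) \<longleftrightarrow>
    (\<exists>ws. tight_from n k (cyc_shift n v -` C) (web_V n - open_nbhd n k 0) ws)"
proof -
  let ?U = "web_V n - open_nbhd n k 0"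
  have eq: "tight_from n k C (web_V n - open_nbhd n k v) (map (cyc_shift n v) ws) \<longleftrightarrow>
      tight_from n k (cyc_shift n v -` C) ?U ws" if "set ws \<subseteq> web_V n" for ws
    unfolding web_V_diff_open_nbhd_cyc_shift[OF assms]
    using that by (intro tight_from_cyc_shift) auto
  show ?thesis
  proof
    assume "\<exists>ws. tight_from n k C (web_V n - open_nbhd n k v) ws"
    then obtain ws where ws: "tight_from n k C (web_V n - open_nbhd n k v) ws" by blast
    then have "set ws \<subseteq> web_V n" by (intro tight_from_subset_web_V) auto
    then obtain ws' where "set ws' \<subseteq> web_V n" "ws = map (cyc_shift n v) ws'"
      using ex_map_cyc_shift by blast
    then show "\<exists>ws. tight_from n k (cyc_shift n v -` C) ?U ws" using eq ws by auto
  next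
    assume "\<exists>ws. tight_from n k (cyc_shift n v -` C) ?U ws"
    then obtain ws where "tight_from n k (cyc_shift n v -` C) ?U ws" by blast
    moreover from this have "set ws \<subseteq> web_V n" by (intro tight_from_subset_web_V) auto
    ultimately show "\<exists>ws. tight_from n k C (web_V n - open_nbhd n k v) ws" using eq by blast
  qed
qed

section \<open>Good configurations and induced paths\<close>

lemma good_config_map: "good_config C (map f xs) = good_config (f -` C) xs"
proof (induction C xs rule: good_config.induct)
  case (4 C a b c rest)
  have "take (length rest + 1) (map f (a # b # c # rest)) =
      map f (take (length rest + 1) (a # b # c # rest))"
    by (simp only: take_map)
  moreover have "last (f c # map f rest) = f (last (c # rest))"
    by (metis last_map list.distinct(1) list.simps(9))
  ultimately show ?case using 4 by (simp del: take_Suc_Cons)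
qed auto

lemma good_config_long:
  "3 \<le> length xs \<Longrightarrow> good_config C xs \<longleftrightarrow>
     hd xs \<notin> C \<and> good_config C (drop 2 xs) \<or> last xs \<notin> C \<and> good_config C (take (length xs - 2) xs)"
proof -
  assume "3 \<le> length xs"
  then obtain a b c rest where "xs = a # b # c # rest"
    by (metis Suc_le_length_iff numeral_3_eq_3)
  then show ?thesis by (simp del: take_Suc_Cons)
qed

lemma good_config_rev: "good_config C (rev xs) = good_config C xs"
proof (induction "length xs" arbitrary: xs rule: less_induct)
  case less
  show ?case
  proof (cases "3 \<le> length xs")
    case True
    then have "xs \<noteq> []" by auto
    have "drop 2 (rev xs) = rev (take (length xs - 2) xs)" using True by (simp add: rev_take)
    moreover have "take (length xs - 2) (rev xs) = rev (drop 2 xs)" by (simp add: rev_drop)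
    moreover have
      "good_config C (rev (take (length xs - 2) xs)) = good_config C (take (length xs - 2) xs)"
      "good_config C (rev (drop 2 xs)) = good_config C (drop 2 xs)"
      using True by (auto intro!: less)
    ultimately have "good_config C (rev xs) \<longleftrightarrow>
        last xs \<notin> C \<and> good_config C (take (length xs - 2) xs) \<or>
        hd xs \<notin> C \<and> good_config C (drop 2 xs)"
      using good_config_long[of "rev xs" C] True \<open>xs \<noteq> []\<close> by (simp add: hd_rev last_rev)
    then show ?thesis using good_config_long[of xs C] True by blast
  next
    case False
    then consider "xs = []" | a where "xs = [a]" | a b where "xs = [a, b]"
      by (cases xs; cases "tl xs"; cases "tl (tl xs)") auto
    then show ?thesis by cases auto
  qed
qed

lemma good_config_upt_iff:
  assumes "a < b"
  shows "good_config C [a..<b + 1] \<longleftrightarrow>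
    a \<notin> C \<and> (a + 1 = b \<or> good_config C [a + 2..<b + 1]) \<or>
    b \<notin> C \<and> (a + 1 = b \<or> good_config C [a..<b - 1])"
proof (cases "a + 1 = b")
  case True
  then have "[a..<b + 1] = [a, b]" by (simp add: upt_rec)
  then show ?thesis using True by auto
next
  case False
  then have "3 \<le> length [a..<b + 1]" using assms by simp
  moreover have "drop 2 [a..<b + 1] = [a + 2..<b + 1]"
    "take (length [a..<b + 1] - 2) [a..<b + 1] = [a..<b - 1]"
    using assms by simp_all
  ultimately show ?thesis using False assms by (simp add: good_config_long)
qed

lemma unit_steps_sorted:
  assumes "distinct xs"
    and steps: "\<forall>i. Suc i < length xs \<longrightarrow> xs ! Suc i = Suc (xs ! i) \<or> xs ! i = Suc (xs ! Suc i)"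
  shows "sorted xs \<or> sorted (rev xs)"
proof -
  \<comment> \<open>two consecutive steps in opposite directions would revisit a vertex\<close>
  have same: "xs ! Suc (Suc i) = Suc (xs ! Suc i) \<longleftrightarrow> xs ! Suc i = Suc (xs ! i)"
    if "Suc (Suc i) < length xs" for i
  proof -
    have "xs ! Suc (Suc i) \<noteq> xs ! i" using assms(1) that by (simp add: nth_eq_iff_index_eq)
    moreover have "xs ! Suc i = Suc (xs ! i) \<or> xs ! i = Suc (xs ! Suc i)"
      "xs ! Suc (Suc i) = Suc (xs ! Suc i) \<or> xs ! Suc i = Suc (xs ! Suc (Suc i))"
      using steps that by simp_all
    ultimately show ?thesis by linarith
  qed
  have all: "xs ! Suc i = Suc (xs ! i) \<longleftrightarrow> xs ! 1 = Suc (xs ! 0)" if "Suc i < length xs" for i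
    using that by (induction i) (simp_all add: same)
  show ?thesis
  proof (cases "2 \<le> length xs \<and> xs ! 1 = Suc (xs ! 0)")
    case True
    then have "sorted xs" using all by (auto simp: sorted_iff_nth_Suc)
    then show ?thesis ..
  next
    case False
    have "xs ! Suc i \<le> xs ! i" if "Suc i < length xs" for i
    proof -
      have "xs ! Suc i \<noteq> Suc (xs ! i)" using all[OF that] False that by auto
      then show ?thesis using steps that by fastforce
    qed
    then have "sorted (rev xs)" by (simp add: sorted_rev_iff_nth_Suc)
    then show ?thesis ..
  qed
qed

lemma unit_steps_eq_upt:
  assumes "distinct xs" "set xs = {p..<q}"
    and "\<forall>i. Suc i < length xs \<longrightarrow> xs ! Suc i = Suc (xs ! i) \<or> xs ! i = Suc (xs ! Suc i)"
  shows "xs = [p..<q] \<or> xs = rev [p..<q]"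
  using unit_steps_sorted[OF assms(1,3)]
proof
  assume "sorted xs"
  then have "xs = [p..<q]" using assms(1,2) by (intro sorted_distinct_set_unique) auto
  then show ?thesis ..
next
  assume "sorted (rev xs)"
  then have "rev xs = [p..<q]" using assms(1,2) by (intro sorted_distinct_set_unique) auto
  then show ?thesis by (metis rev_rev_ident)
qed

lemma induces_path_cyc_shift:
  assumes "S \<subseteq> web_V n" "set as \<subseteq> web_V n"
  shows "induces_path n k (cyc_shift n r ` S) (map (cyc_shift n r) as) \<longleftrightarrow> induces_path n k S as"
proof -
  have inj: "inj_on (cyc_shift n r) (S \<union> set as)"
    using assms by (auto intro: inj_on_subset[OF inj_on_cyc_shift])
  then have "distinct (map (cyc_shift n r) as) \<longleftrightarrow> distinct as"
    by (auto simp: distinct_map intro: inj_on_subset)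
  moreover have "cyc_shift n r ` set as = cyc_shift n r ` S \<longleftrightarrow> set as = S"
    by (rule inj_on_image_eq_iff[OF inj]) auto
  moreover have "as ! p < n" if "p < length as" for p
    using assms(2) nth_mem[OF that] by (auto simp: web_V_def)
  ultimately show ?thesis by (auto simp: induces_path_def web_adj_cyc_shift)
qed

lemma web_V_diff_closed_nbhd_0: "2 * k < n \<Longrightarrow> web_V n - closed_nbhd n k 0 = {k + 1..<n - k}"
  by (auto simp: web_V_def closed_nbhd_def open_nbhd_0)

lemma web_adj_far:
  assumes "1 \<le> k" "k = 1 \<or> n \<le> 2 * k + 3" "x \<in> {k + 1..<n - k}" "y \<in> {k + 1..<n - k}"
  shows "web_adj n k x y \<longleftrightarrow> x = Suc y \<or> y = Suc x"
  using assms by (auto simp: web_adj_iff)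

lemma induces_path_far_upt:
  assumes "1 \<le> k" "2 * k + 2 \<le> n" "k = 1 \<or> n \<le> 2 * k + 3"
  shows "induces_path n k (web_V n - closed_nbhd n k 0) [k + 1..<n - k]"
  using assms by (auto simp: induces_path_def web_V_diff_closed_nbhd_0 web_adj_far)

lemma induces_path_far_cases:
  assumes "1 \<le> k" "2 * k + 2 \<le> n" and path: "induces_path n k (web_V n - closed_nbhd n k 0) as"
  shows "(k = 1 \<or> n \<le> 2 * k + 3) \<and> (as = [k + 1..<n - k] \<or> as = rev [k + 1..<n - k])"
proof -
  have set_as: "set as = {k + 1..<n - k}" and "distinct as"
    and adj: "\<And>p q. p < length as \<Longrightarrow> q < length as \<Longrightarrow>
      web_adj n k (as ! p) (as ! q) \<longleftrightarrow> p = q + 1 \<or> q = p + 1"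
    using path assms by (auto simp: induces_path_def web_V_diff_closed_nbhd_0)
  have small: "k = 1 \<or> n \<le> 2 * k + 3"
  proof (rule ccontr)
    assume big: "\<not> (k = 1 \<or> n \<le> 2 * k + 3)"
    \<comment> \<open>then k + 1, k + 2 and k + 3 would form a triangle\<close>
    then have "k + 1 \<in> set as" "k + 2 \<in> set as" "k + 3 \<in> set as" using set_as by auto
    then obtain i j l where "i < length as" "j < length as" "l < length as"
      "as ! i = k + 1" "as ! j = k + 2" "as ! l = k + 3"
      by (metis in_set_conv_nth)
    moreover have
      "web_adj n k (k + 1) (k + 2)" "web_adj n k (k + 2) (k + 3)" "web_adj n k (k + 1) (k + 3)"
      using big assms by (auto simp: web_adj_iff)
    ultimately have "i = j + 1 \<or> j = i + 1" "j = l + 1 \<or> l = j + 1" "i = l + 1 \<or> l = i + 1"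
      using adj[of i j] adj[of j l] adj[of i l] by auto
    then show False by arith
  qed
  have "\<forall>i. Suc i < length as \<longrightarrow> as ! Suc i = Suc (as ! i) \<or> as ! i = Suc (as ! Suc i)"
  proof (intro allI impI)
    fix i assume i: "Suc i < length as"
    then have "web_adj n k (as ! i) (as ! Suc i)" using adj by simp
    moreover have "as ! i \<in> {k + 1..<n - k}" "as ! Suc i \<in> {k + 1..<n - k}"
      using i set_as nth_mem[of i as] nth_mem[of "Suc i" as] by auto
    ultimately show "as ! Suc i = Suc (as ! i) \<or> as ! i = Suc (as ! Suc i)"
      using web_adj_far[OF assms(1) small] by blast
  qed
  with small \<open>distinct as\<close> set_as show ?thesis using unit_steps_eq_upt by blast
qed

section \<open>The cycle: k = 1\<close>

lemma nbhdC_web1: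
  assumes "0 < w" "w + 1 < n"
  shows "nbhdC n 1 C w = (if w \<in> C then {w - 1, w, w + 1} else {w - 1, w + 1})"
  using assms by (auto simp: mem_nbhdC_iff web_adj_iff)

lemma open_nbhd_web1_0: "3 \<le> n \<Longrightarrow> open_nbhd n 1 0 = {1, n - 1}"
  by (auto simp: open_nbhd_0)

lemma open_nbhd_web1_last: "3 \<le> n \<Longrightarrow> open_nbhd n 1 (n - 1) = {n - 2, 0}"
  by (auto simp: mem_open_nbhd_iff web_adj_iff)

text \<open>While the path a..b of the far vertices is still to be dominated, the other undominated
  vertices are every second vertex on the way around the cycle from a - 2 back to b + 2.\<close>

definition comb :: "nat \<Rightarrow> nat \<Rightarrow> nat \<Rightarrow> nat set" where
  "comb n p q = {x. x < n \<and> (x < p \<and> even (p - x) \<or> q < x \<and> even (x - q))}"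

lemma tight_from_evens:
  assumes "2 * m < n"
  shows "tight_from n 1 C {x. x < 2 * m \<and> even x} (rev (map (\<lambda>j. 2 * j + 1) [0..<m]))"
  using assms
proof (induction m)
  case (Suc m)
  have "nbhdC n 1 C (2 * m + 1) =
      (if 2 * m + 1 \<in> C then {2 * m, 2 * m + 1, 2 * m + 2} else {2 * m, 2 * m + 2})"
    using nbhdC_web1[of "2 * m + 1" n C] Suc.prems by simp
  then have N: "nbhdC n 1 C (2 * m + 1) \<subseteq> {2 * m, 2 * m + 1, 2 * m + 2}"
    "2 * m \<in> nbhdC n 1 C (2 * m + 1)"
    by auto
  then have "nbhdC n 1 C (2 * m + 1) \<inter> {x. x < 2 * Suc m \<and> even x} = {2 * m}"
    by auto
  moreover have "x < 2 * m" if "x < 2 * Suc m" "even x" "x \<noteq> 2 * m" for x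
    using that by presburger
  then have "{x. x < 2 * Suc m \<and> even x} - nbhdC n 1 C (2 * m + 1) = {x. x < 2 * m \<and> even x}"
    using N by auto
  ultimately show ?case using Suc by simp
qed simp

lemma comb_eq_cyc_shift:
  assumes "even p" "even (n - q)" "p \<le> q + 1" "q + 2 \<le> n"
  shows "comb n p q = cyc_shift n (q + 2) ` {x. x < n + p - q - 2 \<and> even x}"
proof (intro set_eqI iffI)
  fix y assume "y \<in> comb n p q"
  then consider "y < n" "q < y" "even (y - q)" | "y < p" "even (p - y)"
    using assms by (auto simp: comb_def)
  then show "y \<in> cyc_shift n (q + 2) ` {x. x < n + p - q - 2 \<and> even x}"
  proof cases
    case 1
    then have "q + 2 \<le> y" by presburger
    with 1 have "y = cyc_shift n (q + 2) (y - q - 2)" "y - q - 2 < n + p - q - 2" "even (y - q - 2)"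
      by (auto simp: cyc_shift_def)
    then show ?thesis by blast
  next
    case 2
    then have "even y" using assms by (metis add_diff_inverse_nat even_add less_imp_not_less)
    have "y + n - q - 2 + (q + 2) = y + n" "y + n - q - 2 + 2 = y + (n - q)"
      using assms by linarith+
    then have "y = cyc_shift n (q + 2) (y + n - q - 2)" "even (y + n - q - 2 + 2)"
      using 2 assms \<open>even y\<close> by (simp_all add: cyc_shift_def)
    moreover have "y + n - q - 2 < n + p - q - 2" using 2 assms by linarith
    ultimately show ?thesis by force
  qed
next
  fix y assume "y \<in> cyc_shift n (q + 2) ` {x. x < n + p - q - 2 \<and> even x}"
  then obtain x where x: "x < n + p - q - 2" "even x" and y: "y = (x + q + 2) mod n"
    by (auto simp: cyc_shift_def add.assoc)
  show "y \<in> comb n p q"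
  proof (cases "x + q + 2 < n")
    case True
    then show ?thesis using x y by (auto simp: comb_def)
  next
    case False
    then have "y = x + q + 2 - n" using x y assms by (simp add: mod_if)
    then have "p - y + (x + 2) = p + (n - q)" using x assms False by linarith
    then have "even (p - y + (x + 2))" using assms by simp
    then have "even (p - y)" using x by simp
    moreover have "y < p" using \<open>y = x + q + 2 - n\<close> x assms False by linarith
    ultimately show ?thesis using assms by (simp add: comb_def)
  qed
qed

lemma tight_from_comb:
  assumes "3 \<le> n" "even p" "even (n - q)" "p \<le> q + 1" "q + 2 \<le> n"
  shows "\<exists>ws. tight_from n 1 C (comb n p q) ws"
proof -
  have "n + p - q - 2 + 2 = p + (n - q)" using assms by linarith
  then have "even (n + p - q - 2 + 2)" using assms by simp
  then have "even (n + p - q - 2)" by simp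
  then obtain m where m: "n + p - q - 2 = 2 * m" by (rule evenE)
  let ?ws = "rev (map (\<lambda>j. 2 * j + 1) [0..<m])"
  have "2 * m < n" using m assms by linarith
  then have "tight_from n 1 (cyc_shift n (q + 2) -` C) {x. x < 2 * m \<and> even x} ?ws"
    by (rule tight_from_evens)
  moreover have "{x. x < 2 * m \<and> even x} \<subseteq> web_V n" "set ?ws \<subseteq> web_V n"
    using \<open>2 * m < n\<close> by (auto simp: web_V_def)
  ultimately have "tight_from n 1 C (cyc_shift n (q + 2) ` {x. x < 2 * m \<and> even x})
      (map (cyc_shift n (q + 2)) ?ws)"
    by (simp add: tight_from_cyc_shift)
  then show ?thesis using comb_eq_cyc_shift[OF assms(2-5)] m by auto
qed

lemma tight_from_path_comb_Cons_left:
  assumes "1 \<le> a" "a < b" "b < n" "a \<notin> C"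
  shows "tight_from n 1 C ({a..b} \<union> comb n a b) (a # ws) \<longleftrightarrow>
    tight_from n 1 C ({a + 2..b} \<union> comb n (a + 2) b) ws"
proof -
  have N: "nbhdC n 1 C a = {a - 1, a + 1}" using assms nbhdC_web1[of a n C] by simp
  have "nbhdC n 1 C a \<inter> ({a..b} \<union> comb n a b) = {a + 1}"
    unfolding N using assms by (auto simp: comb_def)
  moreover have "({a..b} \<union> comb n a b) - nbhdC n 1 C a = {a + 2..b} \<union> comb n (a + 2) b"
  proof (intro set_eqI)
    fix x
    consider "x + 1 < a" | "x + 1 = a" | "x = a" | "x = a + 1" | "a + 2 \<le> x \<and> x \<le> b" | "b < x"
      by linarith
    then show "x \<in> ({a..b} \<union> comb n a b) - nbhdC n 1 C a \<longleftrightarrow> x \<in> {a + 2..b} \<union> comb n (a + 2) b"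
      unfolding N using assms by cases (auto simp: comb_def)
  qed
  ultimately show ?thesis by simp
qed

lemma tight_from_path_comb_Cons_right:
  assumes "1 \<le> a" "a < b" "b + 1 < n" "b \<notin> C"
  shows "tight_from n 1 C ({a..b} \<union> comb n a b) (b # ws) \<longleftrightarrow>
    tight_from n 1 C ({a..b - 2} \<union> comb n a (b - 2)) ws"
proof -
  have N: "nbhdC n 1 C b = {b - 1, b + 1}" using assms nbhdC_web1[of b n C] by simp
  have "nbhdC n 1 C b \<inter> ({a..b} \<union> comb n a b) = {b - 1}"
    unfolding N using assms by (auto simp: comb_def)
  moreover have "({a..b} \<union> comb n a b) - nbhdC n 1 C b = {a..b - 2} \<union> comb n a (b - 2)"
  proof (intro set_eqI)
    fix x
    consider "x < a" | "a \<le> x \<and> x \<le> b - 2" | "x = b - 1" | "x = b" | "b < x"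
      using assms by linarith
    then show "x \<in> ({a..b} \<union> comb n a b) - nbhdC n 1 C b \<longleftrightarrow> x \<in> {a..b - 2} \<union> comb n a (b - 2)"
      unfolding N using assms by cases (auto simp: comb_def)
  qed
  ultimately show ?thesis by simp
qed

lemma tight_from_path_comb_Cons_centre:
  assumes "1 \<le> a" "a + 1 < n" "a \<in> C"
  shows "tight_from n 1 C ({a..a} \<union> comb n a a) (a # ws) \<longleftrightarrow> tight_from n 1 C (comb n a a) ws"
proof -
  have N: "nbhdC n 1 C a = {a - 1, a, a + 1}" using assms nbhdC_web1[of a n C] by simp
  have "nbhdC n 1 C a \<inter> ({a..a} \<union> comb n a a) = {a}"
    unfolding N using assms by (auto simp: comb_def)
  moreover have "({a..a} \<union> comb n a a) - nbhdC n 1 C a = comb n a a"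
    unfolding N using assms by (auto simp: comb_def)
  ultimately show ?thesis by simp
qed

lemma tight_from_path_comb_if_good:
  assumes "3 \<le> n" "2 \<le> a" "a \<le> b + 1" "b + 2 \<le> n" "even a" "even (n - b)"
    and "a = b + 1 \<or> good_config C [a..<b + 1]"
  shows "\<exists>ws. tight_from n 1 C ({a..b} \<union> comb n a b) ws"
  using assms(2-)
proof (induction "b + 1 - a" arbitrary: a b rule: less_induct)
  case less
  consider (empty) "a = b + 1" | (single) "a = b" | (long) "a < b" using less.prems by linarith
  then show ?case
  proof cases
    case empty
    then show ?thesis using tight_from_comb[of n a b C] assms(1) less.prems by simp
  next
    case single
    then have "a \<in> C" using less.prems by simp
    obtain ws where "tight_from n 1 C (comb n a a) ws"
      using tight_from_comb[of n a a C] assms(1) less.prems single by auto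
    then have "tight_from n 1 C ({a..a} \<union> comb n a a) (a # ws)"
      using tight_from_path_comb_Cons_centre[of a n C] \<open>a \<in> C\<close> less.prems single by simp
    then show ?thesis using single by blast
  next
    case long
    then have "a \<notin> C \<and> (a + 1 = b \<or> good_config C [a + 2..<b + 1]) \<or>
        b \<notin> C \<and> (a + 1 = b \<or> good_config C [a..<b - 1])"
      using less.prems good_config_upt_iff[OF long] by simp
    then show ?thesis
    proof
      assume left: "a \<notin> C \<and> (a + 1 = b \<or> good_config C [a + 2..<b + 1])"
      have "b + 1 - (a + 2) < b + 1 - a" using long by simp
      then have "\<exists>ws. tight_from n 1 C ({a + 2..b} \<union> comb n (a + 2) b) ws"
        by (rule less.hyps) (use less.prems long left in auto)
      then obtain ws where "tight_from n 1 C ({a + 2..b} \<union> comb n (a + 2) b) ws" ..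
      then have "tight_from n 1 C ({a..b} \<union> comb n a b) (a # ws)"
        using tight_from_path_comb_Cons_left[of a b n C] less.prems long left by simp
      then show ?thesis ..
    next
      assume right: "b \<notin> C \<and> (a + 1 = b \<or> good_config C [a..<b - 1])"
      have "b - 2 + 1 - a < b + 1 - a" "b - 2 + 1 = b - 1" "n - (b - 2) = n - b + 2"
        using long less.prems by auto
      then have "\<exists>ws. tight_from n 1 C ({a..b - 2} \<union> comb n a (b - 2)) ws"
        by (intro less.hyps) (use less.prems long right in auto)
      then obtain ws where "tight_from n 1 C ({a..b - 2} \<union> comb n a (b - 2)) ws" ..
      then have "tight_from n 1 C ({a..b} \<union> comb n a b) (b # ws)"
        using tight_from_path_comb_Cons_right[of a b n C] less.prems long right by simp
      then show ?thesis ..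
    qed
  qed
qed

lemma comb_vertex_dominates_nothing:
  assumes "4 \<le> n" "2 \<le> a" "a \<le> b" "b + 2 \<le> n" "even a" "even (n - b)"
    and "w \<in> comb n a b" "w \<notin> C"
  shows "nbhdC n 1 C w \<inter> ({a..b} \<union> comb n a b) = {}"
proof (cases "w = 0")
  case True
  have "open_nbhd n 1 0 = {1, n - 1}" using assms by (intro open_nbhd_web1_0) simp
  moreover have "1 \<notin> {a..b} \<union> comb n a b" "n - 1 \<notin> {a..b} \<union> comb n a b"
    using assms by (auto simp: comb_def)
  ultimately show ?thesis using True assms(8) unfolding nbhdC_def by auto
next
  case False
  have "w < n" and side: "w < a \<and> even (a - w) \<or> b < w \<and> even (w - b)"
    using assms(7) by (auto simp: comb_def)
  have far: "w + 2 \<le> a \<or> b + 2 \<le> w \<and> w + 1 < n"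
    using side
  proof
    assume "w < a \<and> even (a - w)"
    then have "a - w \<noteq> 1" by (metis odd_one)
    with \<open>w < a \<and> even (a - w)\<close> show ?thesis by linarith
  next
    assume right: "b < w \<and> even (w - b)"
    then have "w - b \<noteq> 1" by (metis odd_one)
    moreover have "w + 1 \<noteq> n"
    proof
      assume "w + 1 = n"
      then have "n - b = Suc (w - b)" using right by linarith
      with right assms(6) show False by simp
    qed
    ultimately show ?thesis using right \<open>w < n\<close> by linarith
  qed
  then have "nbhdC n 1 C w = {w - 1, w + 1}"
    using nbhdC_web1[of w n C] False assms by auto
  moreover have "w - 1 \<notin> {a..b} \<union> comb n a b" "w + 1 \<notin> {a..b} \<union> comb n a b"
    using far False assms by (auto simp: comb_def)
  ultimately show ?thesis by auto
qed

lemma gap_vertex_dominates_two: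
  assumes "4 \<le> n" "2 \<le> a" "a \<le> b" "b + 2 \<le> n" "even a" "even (n - b)"
    and "w < n" "w \<notin> {a..b} \<union> comb n a b"
  obtains y z where "y \<noteq> z" "y \<in> nbhdC n 1 C w \<inter> ({a..b} \<union> comb n a b)"
    "z \<in> nbhdC n 1 C w \<inter> ({a..b} \<union> comb n a b)"
proof (cases "w = n - 1")
  case True
  have "open_nbhd n 1 (n - 1) = {n - 2, 0}" using assms by (intro open_nbhd_web1_last) simp
  then have "n - 2 \<in> nbhdC n 1 C w" "0 \<in> nbhdC n 1 C w"
    using True by (auto simp: nbhdC_def closed_nbhd_def)
  moreover have "n - 2 \<in> {a..b} \<union> comb n a b" "0 \<in> {a..b} \<union> comb n a b"
    using assms by (auto simp: comb_def)
  ultimately show ?thesis using that[of "n - 2" 0] assms by auto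
next
  case False
  have "0 \<in> comb n a b" using assms by (simp add: comb_def)
  then have "w \<noteq> 0" using assms(8) by (metis UnCI)
  then have w: "0 < w" "w + 1 < n" using False assms(7) by auto
  then have nb: "w - 1 \<in> nbhdC n 1 C w" "w + 1 \<in> nbhdC n 1 C w"
    using nbhdC_web1[of w n C] by auto
  have "w < a \<and> odd (a - w) \<or> b < w \<and> odd (w - b)"
    using assms(7,8) by (auto simp: comb_def)
  then have "w - 1 \<in> {a..b} \<union> comb n a b" "w + 1 \<in> {a..b} \<union> comb n a b"
    using w assms by (auto simp: comb_def)
  with nb show ?thesis using that[of "w - 1" "w + 1"] w by auto
qed

lemma singleton_pick_on_path:
  assumes "4 \<le> n" "2 \<le> a" "a \<le> b" "b + 2 \<le> n" "even a" "even (n - b)" "comb n a b \<inter> C = {}"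
    and single: "nbhdC n 1 C w \<inter> ({a..b} \<union> comb n a b) = {x}"
  shows "w \<in> {a..b}"
proof (rule ccontr)
  let ?S = "{a..b} \<union> comb n a b"
  assume "w \<notin> {a..b}"
  have "w < n"
  proof (rule ccontr)
    assume "\<not> w < n"
    then have "nbhdC n 1 C w \<inter> web_V n = {}" by (intro nbhdC_Int_web_V_empty) simp
    moreover have "?S \<subseteq> web_V n" using assms by (auto simp: web_V_def comb_def)
    ultimately show False using single by blast
  qed
  show False
  proof (cases "w \<in> comb n a b")
    case True
    then have "w \<notin> C" using assms(7) by blast
    with True have "nbhdC n 1 C w \<inter> ?S = {}" by (rule comb_vertex_dominates_nothing[OF assms(1-6)])
    with single show False by simp
  next
    case False
    with \<open>w \<notin> {a..b}\<close> obtain y z where "y \<noteq> z" "y \<in> nbhdC n 1 C w \<inter> ?S" "z \<in> nbhdC n 1 C w \<inter> ?S"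
      using gap_vertex_dominates_two[OF assms(1-6) \<open>w < n\<close>] by blast
    with single show False by (metis singletonD)
  qed
qed

lemma path_comb_singleton_pick_cases:
  assumes "4 \<le> n" "2 \<le> a" "a \<le> b" "b + 2 \<le> n" "even a" "even (n - b)" "comb n a b \<inter> C = {}"
    and single: "nbhdC n 1 C w \<inter> ({a..b} \<union> comb n a b) = {x}"
  shows "w = a \<and> a < b \<and> a \<notin> C \<or> w = b \<and> a < b \<and> b \<notin> C \<or> w = a \<and> a = b \<and> a \<in> C"
proof -
  let ?S = "{a..b} \<union> comb n a b"
  have two: "y = z" if "y \<in> nbhdC n 1 C w \<inter> ?S" "z \<in> nbhdC n 1 C w \<inter> ?S" for y z
    using single that by (metis singletonD)
  have "w \<in> {a..b}" using singleton_pick_on_path[OF assms] .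
  then have "0 < w" "w + 1 < n" using assms by auto
  then have N: "nbhdC n 1 C w = (if w \<in> C then {w - 1, w, w + 1} else {w - 1, w + 1})"
    by (rule nbhdC_web1)
  consider "a < w" "w < b" | "w = a" "a < b" | "w = b" "a < b" | "w = a" "a = b"
    using \<open>w \<in> {a..b}\<close> by force
  then show ?thesis
  proof cases
    case 1
    then have "w - 1 \<in> nbhdC n 1 C w \<inter> ?S" "w + 1 \<in> nbhdC n 1 C w \<inter> ?S" unfolding N by auto
    then have "w - 1 = w + 1" by (rule two)
    then show ?thesis by simp
  next
    case 2
    have "a \<notin> C"
    proof
      assume "a \<in> C"
      with 2 have "a \<in> nbhdC n 1 C w \<inter> ?S" "a + 1 \<in> nbhdC n 1 C w \<inter> ?S" unfolding N by auto
      then have "a = a + 1" by (rule two)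
      then show False by simp
    qed
    with 2 show ?thesis by simp
  next
    case 3
    have "b \<notin> C"
    proof
      assume "b \<in> C"
      with 3 have "b \<in> nbhdC n 1 C w \<inter> ?S" "b - 1 \<in> nbhdC n 1 C w \<inter> ?S" unfolding N by auto
      then have "b = b - 1" by (rule two)
      with 3 show False by simp
    qed
    with 3 show ?thesis by simp
  next
    case 4
    have "a \<in> C"
    proof (rule ccontr)
      assume "a \<notin> C"
      then have "nbhdC n 1 C w = {w - 1, w + 1}" using N 4 by simp
      moreover have "w - 1 \<notin> ?S" "w + 1 \<notin> ?S" using 4 assms by (auto simp: comb_def)
      ultimately have "nbhdC n 1 C w \<inter> ?S = {}" by auto
      with single show False by simp
    qed
    with 4 show ?thesis by simp
  qed
qed

lemma comb_subset_left: "comb n (a + 2) b \<subseteq> insert a (comb n a b)"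
proof
  fix x assume x: "x \<in> comb n (a + 2) b"
  show "x \<in> insert a (comb n a b)"
  proof (cases "x < a")
    case True
    then have "a + 2 - x = (a - x) + 2" by simp
    with x True show ?thesis by (simp add: comb_def)
  next
    case False
    then have "x = a \<or> x = a + 1 \<or> a + 1 < x" by linarith
    with x show ?thesis by (auto simp: comb_def)
  qed
qed

lemma comb_subset_right:
  assumes "2 \<le> b" shows "comb n a (b - 2) \<subseteq> insert b (comb n a b)"
proof
  fix x assume x: "x \<in> comb n a (b - 2)"
  show "x \<in> insert b (comb n a b)"
  proof (cases "b < x")
    case True
    then have "x - (b - 2) = (x - b) + 2" using assms by simp
    with x True show ?thesis by (auto simp: comb_def)
  next
    case False
    then have "x + 1 < b \<or> x + 1 = b \<or> x = b" by linarith
    with x assms show ?thesis by (auto simp: comb_def)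
  qed
qed

lemma good_if_tight_from_path_comb:
  assumes "4 \<le> n" "2 \<le> a" "a \<le> b" "b + 2 \<le> n" "even a" "even (n - b)" "comb n a b \<inter> C = {}"
    and "tight_from n 1 C ({a..b} \<union> comb n a b) ws"
  shows "good_config C [a..<b + 1]"
  using assms(2-)
proof (induction "b - a" arbitrary: a b ws rule: less_induct)
  case less
  let ?S = "{a..b} \<union> comb n a b"
  obtain w ws' where ws: "ws = w # ws'" using less.prems by (cases ws) auto
  with less.prems obtain x where single: "nbhdC n 1 C w \<inter> ?S = {x}" by auto
  from path_comb_singleton_pick_cases[OF assms(1) less.prems(1-6) single]
  consider (left) "w = a" "a < b" "a \<notin> C" | (right) "w = b" "a < b" "b \<notin> C"
    | (centre) "a = b" "a \<in> C"
    by blast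
  then show ?case
  proof cases
    case centre
    then show ?thesis by simp
  next
    case left
    show ?thesis
    proof (cases "a + 1 = b")
      case False
      have "b - (a + 2) < b - a" "a + 2 \<le> b" using left False by auto
      moreover have "comb n (a + 2) b \<inter> C = {}" using comb_subset_left left less.prems by blast
      moreover have "tight_from n 1 C ({a + 2..b} \<union> comb n (a + 2) b) ws'"
        using less.prems(7) tight_from_path_comb_Cons_left[of a b n C] left less.prems ws by simp
      ultimately have "good_config C [a + 2..<b + 1]"
        using less.hyps less.prems by simp
      then show ?thesis using good_config_upt_iff[of a b C] left by simp
    qed (use good_config_upt_iff[of a b C] left in simp)
  next
    case right
    show ?thesis
    proof (cases "a + 1 = b")
      case False
      have "b - 2 - a < b - a" "a \<le> b - 2" "b - 2 + 2 \<le> n" "even (n - (b - 2))" "b - 2 + 1 = b - 1"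
        using right False less.prems by auto
      moreover have "comb n a (b - 2) \<inter> C = {}"
        using comb_subset_right[of b n a] right less.prems by auto
      moreover have "tight_from n 1 C ({a..b - 2} \<union> comb n a (b - 2)) ws'"
        using less.prems(7) tight_from_path_comb_Cons_right[of a b n C] right less.prems ws by simp
      ultimately have "good_config C [a..<b - 1]"
        using less.hyps[of "b - 2" a] less.prems by simp
      then show ?thesis using good_config_upt_iff[of a b C] right by simp
    qed (use good_config_upt_iff[of a b C] right in simp)
  qed
qed

lemma ex_tight_from_web1_iff:
  assumes "4 \<le> n" "0 \<notin> C"
  shows "(\<exists>ws. tight_from n 1 C (web_V n - open_nbhd n 1 0) ws) \<longleftrightarrow> good_config C [2..<n - 1]"
proof -
  have "x \<in> comb n 2 (n - 2) \<longleftrightarrow> x = 0" for x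
  proof -
    consider "x < 2" | "2 \<le> x \<and> x \<le> n - 2" | "x = n - 1" | "n \<le> x" by linarith
    then show ?thesis using assms by cases (auto simp: comb_def)
  qed
  then have comb: "comb n 2 (n - 2) = {0}" by auto
  have U: "web_V n - open_nbhd n 1 0 = {2..n - 2} \<union> comb n 2 (n - 2)"
  proof -
    have O: "open_nbhd n 1 0 = {1, n - 1}" using assms by (intro open_nbhd_web1_0) simp
    show ?thesis unfolding O comb web_V_def using assms by auto
  qed
  have "n - 2 + 1 = n - 1" using assms by arith
  then have upt: "[2..<n - 1] = [2..<n - 2 + 1]" by (simp only:)
  have bounds: "2 \<le> n - 2" "n - 2 + 2 \<le> n" "even (n - (n - 2))" using assms by auto
  show ?thesis
  proof
    assume "\<exists>ws. tight_from n 1 C (web_V n - open_nbhd n 1 0) ws"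
    then obtain ws where "tight_from n 1 C ({2..n - 2} \<union> comb n 2 (n - 2)) ws" unfolding U ..
    moreover have "comb n 2 (n - 2) \<inter> C = {}" using assms comb by auto
    ultimately show "good_config C [2..<n - 1]"
      unfolding upt using good_if_tight_from_path_comb assms(1) bounds by simp
  next
    assume "good_config C [2..<n - 1]"
    then show "\<exists>ws. tight_from n 1 C (web_V n - open_nbhd n 1 0) ws"
      unfolding U upt using tight_from_path_comb_if_good assms(1) bounds by simp
  qed
qed

section \<open>Wider webs: k \<ge> 2\<close>

lemma web_V_diff_open_nbhd_0:
  "2 * k < n \<Longrightarrow> web_V n - open_nbhd n k 0 = insert 0 {k + 1..<n - k}"
  by (auto simp: web_V_def open_nbhd_0)

lemma tight_from_far_singleton:
  assumes "1 \<le> k" "n = 2 * k + 2" "k + 1 \<in> C"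
  shows "tight_from n k C (web_V n - open_nbhd n k 0) [k + 1, 1]"
proof -
  have N1: "nbhdC n k C (k + 1) \<inter> {0, k + 1} = {k + 1}"
    using assms by (auto simp: mem_nbhdC_iff web_adj_iff)
  have N2: "nbhdC n k C 1 \<inter> {0} = {0}"
    using assms by (auto simp: mem_nbhdC_iff web_adj_iff)
  have "tight_from n k C {0} [1]"
    by (rule tight_from_Cons_singletonI[OF N2]) simp
  then have "tight_from n k C {0, k + 1} [k + 1, 1]"
    by (intro tight_from_Cons_singletonI[OF N1]) auto
  moreover have "web_V n - open_nbhd n k 0 = {0, k + 1}"
    using assms by (auto simp: web_V_diff_open_nbhd_0)
  ultimately show ?thesis by simp
qed

lemma tight_from_far_pair_left:
  assumes "1 \<le> k" "n = 2 * k + 3" "k + 1 \<notin> C"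
  shows "tight_from n k C (web_V n - open_nbhd n k 0) [k + 1, n - 1, 1]"
proof -
  have N1: "nbhdC n k C (k + 1) \<inter> {0, k + 1, k + 2} = {k + 2}"
    using assms by (auto simp: mem_nbhdC_iff web_adj_iff)
  have N2: "nbhdC n k C (n - 1) \<inter> {0, k + 1} = {0}"
    using assms by (auto simp: mem_nbhdC_iff web_adj_iff)
  have N3: "nbhdC n k C 1 \<inter> {k + 1} = {k + 1}"
    using assms by (auto simp: mem_nbhdC_iff web_adj_iff)
  have "tight_from n k C {k + 1} [1]"
    by (rule tight_from_Cons_singletonI[OF N3]) simp
  then have "tight_from n k C {0, k + 1} [n - 1, 1]"
    by (intro tight_from_Cons_singletonI[OF N2]) auto
  moreover have "{0, k + 1, k + 2} - {k + 2} = {0, k + 1}" by auto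
  ultimately have "tight_from n k C {0, k + 1, k + 2} [k + 1, n - 1, 1]"
    by (intro tight_from_Cons_singletonI[OF N1]) simp
  moreover have "web_V n - open_nbhd n k 0 = {0, k + 1, k + 2}"
    using assms by (auto simp: web_V_diff_open_nbhd_0)
  ultimately show ?thesis by simp
qed

lemma tight_from_far_pair_right:
  assumes "1 \<le> k" "n = 2 * k + 3" "k + 2 \<notin> C"
  shows "tight_from n k C (web_V n - open_nbhd n k 0) [k + 2, 1, n - 1]"
proof -
  have N1: "nbhdC n k C (k + 2) \<inter> {0, k + 1, k + 2} = {k + 1}"
    using assms by (auto simp: mem_nbhdC_iff web_adj_iff)
  have N2: "nbhdC n k C 1 \<inter> {0, k + 2} = {0}"
    using assms by (auto simp: mem_nbhdC_iff web_adj_iff)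
  have N3: "nbhdC n k C (n - 1) \<inter> {k + 2} = {k + 2}"
    using assms by (auto simp: mem_nbhdC_iff web_adj_iff)
  have "tight_from n k C {k + 2} [n - 1]"
    by (rule tight_from_Cons_singletonI[OF N3]) simp
  then have "tight_from n k C {0, k + 2} [1, n - 1]"
    by (intro tight_from_Cons_singletonI[OF N2]) auto
  moreover have "{0, k + 1, k + 2} - {k + 1} = {0, k + 2}" by auto
  ultimately have "tight_from n k C {0, k + 1, k + 2} [k + 2, 1, n - 1]"
    by (intro tight_from_Cons_singletonI[OF N1]) simp
  moreover have "web_V n - open_nbhd n k 0 = {0, k + 1, k + 2}"
    using assms by (auto simp: web_V_diff_open_nbhd_0)
  ultimately show ?thesis by simp
qed

lemma tight_from_far_small:
  assumes "1 \<le> k" "2 * k + 2 \<le> n" "n \<le> 2 * k + 3" and good: "good_config C [k + 1..<n - k]"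
  shows "\<exists>ws. tight_from n k C (web_V n - open_nbhd n k 0) ws"
proof (cases "n = 2 * k + 2")
  case True
  with good have "k + 1 \<in> C" by simp
  then show ?thesis using tight_from_far_singleton[OF assms(1) True] by blast
next
  case False
  then have n: "n = 2 * k + 3" using assms by simp
  then have "[k + 1..<n - k] = [k + 1, k + 2]" by (simp add: upt_rec)
  with good have "k + 1 \<notin> C \<or> k + 2 \<notin> C" by simp
  then show ?thesis
    using tight_from_far_pair_left[OF assms(1) n] tight_from_far_pair_right[OF assms(1) n]
    by blast
qed

lemma first_pick_far:
  assumes "1 \<le> k" "2 * k + 2 \<le> n" "0 \<notin> C"
    and single: "nbhdC n k C w \<inter> (web_V n - open_nbhd n k 0) = {x}"
  shows "k + 1 \<le> w \<and> w < n - k"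
proof -
  let ?U = "web_V n - open_nbhd n k 0"
  have U: "?U = insert 0 {k + 1..<n - k}" using assms by (simp add: web_V_diff_open_nbhd_0)
  have two: "y = z" if "web_adj n k w y" "web_adj n k w z" "y \<in> ?U" "z \<in> ?U" for y z
    using single that by (metis IntI mem_nbhdC_iff singletonD)
  have "w < n"
  proof (rule ccontr)
    assume "\<not> w < n"
    then have "nbhdC n k C w \<inter> web_V n = {}" by (intro nbhdC_Int_web_V_empty) simp
    with single show False by auto
  qed
  consider "w = 0" | "1 \<le> w \<and> w \<le> k" | "n - k \<le> w" | "k + 1 \<le> w \<and> w < n - k"
    by linarith
  then show ?thesis
  proof cases
    case 1
    then have "nbhdC n k C w \<inter> ?U = {}" using assms by (auto simp: nbhdC_def)
    with single show ?thesis by simp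
  next
    case 2
    then have "web_adj n k w 0" "web_adj n k w (k + 1)"
      using assms by (auto simp: web_adj_iff)
    moreover have "0 \<in> ?U" "k + 1 \<in> ?U" using assms by (auto simp: U)
    ultimately have "0 = k + 1" using two by blast
    then show ?thesis by simp
  next
    case 3
    then have "web_adj n k w 0" "web_adj n k w (n - k - 1)"
      using assms \<open>w < n\<close> by (auto simp: web_adj_iff)
    moreover have "0 \<in> ?U" "n - k - 1 \<in> ?U" using assms by (auto simp: U)
    ultimately have "0 = n - k - 1" using two by blast
    then show ?thesis using assms by simp
  qed
qed

lemma first_pick_small:
  assumes "2 \<le> k" "k + 1 \<le> w" "w < n - k"
    and single: "nbhdC n k C w \<inter> (web_V n - open_nbhd n k 0) = {x}"
  shows "n \<le> 2 * k + 3"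
proof (rule ccontr)
  assume big: "\<not> n \<le> 2 * k + 3"
  obtain y z where "y \<noteq> z" "y \<in> {k + 1..<n - k}" "z \<in> {k + 1..<n - k}"
    "web_adj n k w y" "web_adj n k w z"
  proof (cases "w = k + 1")
    case True
    then show ?thesis
      by (intro that[of "k + 2" "k + 3"]) (use assms big in \<open>auto simp: web_adj_iff\<close>)
  next
    case False
    show ?thesis
    proof (cases "w + 1 < n - k")
      case True
      then show ?thesis
        by (intro that[of "w - 1" "w + 1"]) (use assms False in \<open>auto simp: web_adj_iff\<close>)
    next
      case False
      then show ?thesis
        by (intro that[of "w - 1" "w - 2"]) (use assms \<open>w \<noteq> k + 1\<close> big in \<open>auto simp: web_adj_iff\<close>)
    qed
  qed
  moreover have "{k + 1..<n - k} \<subseteq> web_V n - open_nbhd n k 0"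
    using big by (auto simp: web_V_diff_open_nbhd_0)
  ultimately show False using single by (metis IntI mem_nbhdC_iff singletonD subsetD)
qed

lemma first_pick_good:
  assumes "1 \<le> k" "2 * k + 2 \<le> n" "n \<le> 2 * k + 3" "k + 1 \<le> w" "w < n - k"
    and single: "nbhdC n k C w \<inter> (web_V n - open_nbhd n k 0) = {x}"
  shows "good_config C [k + 1..<n - k]"
proof (cases "n = 2 * k + 2")
  case True
  then have "w = k + 1" using assms by simp
  have "k + 1 \<in> C"
  proof (rule ccontr)
    assume "k + 1 \<notin> C"
    then have "nbhdC n k C w \<inter> (web_V n - open_nbhd n k 0) = {}"
      using True \<open>w = k + 1\<close>
      by (auto simp: web_V_diff_open_nbhd_0 nbhdC_def mem_open_nbhd_iff web_adj_iff)
    with single show False by simp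
  qed
  then show ?thesis using True by simp
next
  case False
  then have n: "n = 2 * k + 3" using assms by simp
  have "\<not> (k + 1 \<in> C \<and> k + 2 \<in> C)"
  proof
    assume both: "k + 1 \<in> C \<and> k + 2 \<in> C"
    have w: "w = k + 1 \<or> w = k + 2" using assms n by auto
    then obtain v where "v \<noteq> w" "v \<in> {k + 1, k + 2}" "web_adj n k w v" "w \<in> C"
      using both n assms by (auto simp: web_adj_iff)
    moreover have "{k + 1, k + 2} \<subseteq> web_V n - open_nbhd n k 0"
      using n by (auto simp: web_V_diff_open_nbhd_0)
    ultimately have "v \<in> nbhdC n k C w \<inter> (web_V n - open_nbhd n k 0)"
      "w \<in> nbhdC n k C w \<inter> (web_V n - open_nbhd n k 0)"
      using w by (auto simp: mem_nbhdC_iff)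
    with single \<open>v \<noteq> w\<close> show False by (metis singletonD)
  qed
  moreover have "[k + 1..<n - k] = [k + 1, k + 2]" using n by (simp add: upt_rec)
  ultimately show ?thesis by simp
qed

lemma far_small_good_if_tight_from:
  assumes "2 \<le> k" "2 * k + 2 \<le> n" "0 \<notin> C"
    and tight: "tight_from n k C (web_V n - open_nbhd n k 0) ws"
  shows "n \<le> 2 * k + 3 \<and> good_config C [k + 1..<n - k]"
proof -
  have "web_V n - open_nbhd n k 0 \<noteq> {}" using assms by (simp add: web_V_diff_open_nbhd_0)
  then obtain w ws' where "ws = w # ws'" using tight by (cases ws) auto
  then obtain x where single: "nbhdC n k C w \<inter> (web_V n - open_nbhd n k 0) = {x}"
    using tight by auto
  have far: "k + 1 \<le> w" "w < n - k" using first_pick_far[OF _ assms(2,3) single] assms by auto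
  have "n \<le> 2 * k + 3" using first_pick_small[OF assms(1) far single] .
  with first_pick_good[OF _ assms(2) _ far single] assms show ?thesis by auto
qed

lemma ex_tight_from_iff_good:
  assumes "1 \<le> k" "2 * k + 2 \<le> n" "0 \<notin> C"
  shows "(\<exists>ws. tight_from n k C (web_V n - open_nbhd n k 0) ws) \<longleftrightarrow>
    (k = 1 \<or> n \<le> 2 * k + 3) \<and> good_config C [k + 1..<n - k]"
proof (cases "k = 1")
  case True
  then have "[k + 1..<n - k] = [2..<n - 1]" by (simp add: numeral_2_eq_2)
  with True show ?thesis using ex_tight_from_web1_iff[of n C] assms by simp
next
  case False
  then show ?thesis
    using far_small_good_if_tight_from[of k n C] tight_from_far_small[of k n C] assms by auto
qed

lemma ex_far_path_iff_good:
  assumes "1 \<le> k" "2 * k + 2 \<le> n" "v < n"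
  shows "(\<exists>as. induces_path n k (web_V n - closed_nbhd n k v) as \<and> length as = n - 2 * k - 1 \<and>
      good_config C as) \<longleftrightarrow>
    (k = 1 \<or> n \<le> 2 * k + 3) \<and> good_config (cyc_shift n v -` C) [k + 1..<n - k]"
proof -
  let ?S = "web_V n - closed_nbhd n k 0"
  have S: "?S \<subseteq> web_V n" by auto
  have path: "induces_path n k (web_V n - closed_nbhd n k v) (map (cyc_shift n v) as) \<longleftrightarrow>
      induces_path n k ?S as" if "set as \<subseteq> web_V n" for as
    unfolding web_V_diff_closed_nbhd_cyc_shift[OF assms(3)]
    using S that by (rule induces_path_cyc_shift)
  show ?thesis
  proof
    assume "\<exists>as. induces_path n k (web_V n - closed_nbhd n k v) as \<and> length as = n - 2 * k - 1 \<and>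
      good_config C as"
    then obtain as where as: "induces_path n k (web_V n - closed_nbhd n k v) as" "good_config C as"
      by blast
    then have "set as \<subseteq> web_V n" by (auto simp: induces_path_def)
    then obtain as' where as': "set as' \<subseteq> web_V n" "as = map (cyc_shift n v) as'"
      using ex_map_cyc_shift by blast
    with as path have "induces_path n k ?S as'" by simp
    then have "(k = 1 \<or> n \<le> 2 * k + 3) \<and> (as' = [k + 1..<n - k] \<or> as' = rev [k + 1..<n - k])"
      using induces_path_far_cases assms by blast
    moreover have "good_config (cyc_shift n v -` C) as'" using as as' by (simp add: good_config_map)
    ultimately show "(k = 1 \<or> n \<le> 2 * k + 3) \<and> good_config (cyc_shift n v -` C) [k + 1..<n - k]"
      by (auto simp: good_config_rev)
  next
    assume asm: "(k = 1 \<or> n \<le> 2 * k + 3) \<and> good_config (cyc_shift n v -` C) [k + 1..<n - k]"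
    let ?as = "map (cyc_shift n v) [k + 1..<n - k]"
    have "set [k + 1..<n - k] \<subseteq> web_V n" by (auto simp: web_V_def)
    then have "induces_path n k (web_V n - closed_nbhd n k v) ?as"
      using path induces_path_far_upt[OF assms(1,2)] asm by simp
    moreover have "good_config C ?as" using asm by (simp add: good_config_map)
    moreover have "length ?as = n - 2 * k - 1" by simp
    ultimately show "\<exists>as. induces_path n k (web_V n - closed_nbhd n k v) as \<and>
        length as = n - 2 * k - 1 \<and> good_config C as"
      by blast
  qed
qed

lemma card_web_V_diff_nbhdC:
  assumes "2 * k < n" "v < n"
  shows "card (web_V n - nbhdC n k C v) = n - (if v \<in> C then 2 * k + 1 else 2 * k)"
proof -
  have "card (web_V n - nbhdC n k C v) = card (web_V n) - card (nbhdC n k C v)"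
    using assms by (intro card_Diff_subset finite_nbhdC nbhdC_subset_web_V)
  then show ?thesis using assms by (simp add: card_nbhdC web_V_def)
qed

lemma legal_dominating_length_iff_tight:
  assumes "2 * k < n"
  shows "(\<exists>vs. legal_seq n k C vs \<and> dominating_seq n k C vs \<and> length vs = n - 2 * k + 1) \<longleftrightarrow>
    (\<exists>v \<in> web_V n - C. \<exists>ws. tight_from n k C (web_V n - open_nbhd n k v) ws)"
proof
  assume "\<exists>vs. legal_seq n k C vs \<and> dominating_seq n k C vs \<and> length vs = n - 2 * k + 1"
  then obtain vs
    where vs: "legal_seq n k C vs" "dominating_seq n k C vs" "length vs = n - 2 * k + 1"
    by blast
  obtain v ws where v: "vs = v # ws" "v < n" "length ws \<le> card (web_V n - nbhdC n k C v)"
    by (rule legal_dominating_length[OF _ vs(1,2)]) (use assms in auto)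
  then have "v \<notin> C" "length ws = card (web_V n - nbhdC n k C v)"
    using vs(3) assms card_web_V_diff_nbhdC[of k n v C] by (auto split: if_splits)
  with v vs have "tight_from n k C (web_V n - open_nbhd n k v) ws"
    using tight_from_iff_legal_dominating[of v n k C ws] by (simp add: nbhdC_def)
  with v \<open>v \<notin> C\<close> show "\<exists>v \<in> web_V n - C. \<exists>ws. tight_from n k C (web_V n - open_nbhd n k v) ws"
    by (auto simp: web_V_def)
next
  assume "\<exists>v \<in> web_V n - C. \<exists>ws. tight_from n k C (web_V n - open_nbhd n k v) ws"
  then obtain v ws where "v < n" "v \<notin> C" "tight_from n k C (web_V n - nbhdC n k C v) ws"
    by (auto simp: web_V_def nbhdC_def)
  then have "legal_seq n k C (v # ws) \<and> dominating_seq n k C (v # ws) \<and>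
      length (v # ws) = n - 2 * k + 1"
    using tight_from_iff_legal_dominating[of v n k C ws] card_web_V_diff_nbhdC[of k n v C] assms
    by simp
  then show "\<exists>vs. legal_seq n k C vs \<and> dominating_seq n k C vs \<and> length vs = n - 2 * k + 1" ..
qed

lemma gamma_gr_eq:
  assumes "1 \<le> k" "2 * k + 2 \<le> n" "C \<subseteq> web_V n"
  shows "gamma_gr n k C =
    (if C \<noteq> web_V n \<and>
        (\<exists>vs. legal_seq n k C vs \<and> dominating_seq n k C vs \<and> length vs = n - 2 * k + 1)
     then n - 2 * k + 1 else n - 2 * k)"
proof -
  let ?L = "{length vs | vs. legal_seq n k C vs \<and> dominating_seq n k C vs}"
  have bound: "l \<le> n - 2 * k + (if C = web_V n then 0 else 1)" if l: "l \<in> ?L" for l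
  proof -
    obtain vs where vs: "l = length vs" "legal_seq n k C vs" "dominating_seq n k C vs"
      using l by blast
    obtain v ws where v: "vs = v # ws" "v < n" "length ws \<le> card (web_V n - nbhdC n k C v)"
      by (rule legal_dominating_length[OF _ vs(2,3)]) (use assms in auto)
    have "card (web_V n - nbhdC n k C v) = n - (if v \<in> C then 2 * k + 1 else 2 * k)"
      using assms v(2) by (intro card_web_V_diff_nbhdC) auto
    moreover have "C = web_V n \<Longrightarrow> v \<in> C" using v(2) by (simp add: web_V_def)
    ultimately show ?thesis using vs(1) v(1,3) assms by (cases "v \<in> C") auto
  qed
  have "?L \<subseteq> {..n - 2 * k + 1}"
  proof
    fix l assume "l \<in> ?L"
    from bound[OF this] show "l \<in> {..n - 2 * k + 1}" by (simp split: if_splits)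
  qed
  then have fin: "finite ?L" by (rule finite_subset) simp
  have base: "n - 2 * k \<in> ?L"
    using legal_seq_upt[OF assms(1,2)] dominating_seq_upt[OF assms(1,2)] by force
  show ?thesis
  proof (cases "C \<noteq> web_V n \<and> (\<exists>vs. legal_seq n k C vs \<and> dominating_seq n k C vs \<and>
      length vs = n - 2 * k + 1)")
    case True
    then have "n - 2 * k + 1 \<in> ?L" by auto
    with True show ?thesis
      unfolding gamma_gr_def by (intro Max_eqI[OF fin]) (use bound in auto)
  next
    case False
    have "l \<le> n - 2 * k" if "l \<in> ?L" for l
    proof (cases "C = web_V n")
      case False
      with \<open>\<not> (C \<noteq> web_V n \<and> _)\<close> have "l \<noteq> n - 2 * k + 1" using that by auto
      with bound[OF that] False show ?thesis by simp
    qed (use bound[OF that] in simp)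
    with False base show ?thesis
      unfolding gamma_gr_def by (intro Max_eqI[OF fin]) auto
  qed
qed

lemma ex_tight_from_iff_ex_far_path:
  assumes "1 \<le> k" "2 * k + 2 \<le> n" "v \<in> web_V n - C"
  shows "(\<exists>ws. tight_from n k C (web_V n - open_nbhd n k v) ws) \<longleftrightarrow>
    (\<exists>as. induces_path n k (web_V n - closed_nbhd n k v) as \<and> length as = n - 2 * k - 1 \<and>
       good_config C as)"
proof -
  have v: "v < n" "0 \<notin> cyc_shift n v -` C" using assms(3) by (auto simp: web_V_def cyc_shift_0)
  have "(\<exists>ws. tight_from n k C (web_V n - open_nbhd n k v) ws) \<longleftrightarrow>
      (\<exists>ws. tight_from n k (cyc_shift n v -` C) (web_V n - open_nbhd n k 0) ws)"
    using v(1) by (rule ex_tight_from_cyc_shift)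
  also have "\<dots> \<longleftrightarrow> (k = 1 \<or> n \<le> 2 * k + 3) \<and> good_config (cyc_shift n v -` C) [k + 1..<n - k]"
    using v(2) by (rule ex_tight_from_iff_good[OF assms(1,2)])
  also have "\<dots> \<longleftrightarrow> (\<exists>as. induces_path n k (web_V n - closed_nbhd n k v) as \<and>
      length as = n - 2 * k - 1 \<and> good_config C as)"
    using v(1) by (rule ex_far_path_iff_good[OF assms(1,2), symmetric])
  finally show ?thesis .
qed

theorem proposition4:
  fixes n k :: nat and C :: "nat set"
  assumes "k \<ge> 1" and "n \<ge> 2 * (k + 1)" and "C \<subseteq> web_V n"
  defines "m1 \<equiv> n - Min ((\<lambda>v. card (nbhdC n k C v)) ` web_V n) + 1"
  shows "gamma_gr n k C =
          (if C = web_V n \<or>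
              (\<exists>i \<in> web_V n - C. \<exists>as. induces_path n k (web_V n - closed_nbhd n k i) as \<and>
                  length as = n - 2 * k - 1 \<and> good_config C as)
           then m1 else m1 - 1)"
proof -
  have n: "1 \<le> k" "2 * k + 2 \<le> n" using assms by auto
  have "Min ((\<lambda>v. card (nbhdC n k C v)) ` web_V n) = (if C = web_V n then 2 * k + 1 else 2 * k)"
    using assms by (intro Min_card_nbhdC) auto
  moreover have "n - (2 * k + 1) + 1 = n - 2 * k" using n by arith
  ultimately have m1: "m1 = (if C = web_V n then n - 2 * k else n - 2 * k + 1)"
    unfolding m1_def by simp
  have "(\<exists>vs. legal_seq n k C vs \<and> dominating_seq n k C vs \<and> length vs = n - 2 * k + 1) \<longleftrightarrow>
      (\<exists>v \<in> web_V n - C. \<exists>ws. tight_from n k C (web_V n - open_nbhd n k v) ws)"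
    using n by (intro legal_dominating_length_iff_tight) simp
  also have "\<dots> \<longleftrightarrow> (\<exists>i \<in> web_V n - C. \<exists>as. induces_path n k (web_V n - closed_nbhd n k i) as \<and>
      length as = n - 2 * k - 1 \<and> good_config C as)"
    using ex_tight_from_iff_ex_far_path[OF n] by (rule bex_cong[OF refl])
  finally show ?thesis using gamma_gr_eq[OF n assms(3)] m1 by auto
qed

end
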